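(* Fix the data and parameters described in the context, and fix a choice of whether the net-zero-energy (ZEH) constraint $a\sum_{k=0}^{K}Y_k \ge \sum_{k=0}^{K}X_k$ is imposed; it is either included in both problems $(\mathrm{P})$ and $(\mathrm{LP})$ below or omitted from both. Then the optimal value (infimum of the objective over the feasible set) of problem $(\mathrm{LP})$ is less than or equal to the optimal value of problem $(\mathrm{P})$.
   Context: Data: a horizon $K\ge 1$; real numbers $Y_0,\dots,Y_K$ (PV energy production per m$^2$ at each time step) and $X_0,\dots,X_K$ (energy consumption at each time step); real prices $\Pi_{PV},\Pi_B,\Pi_R,\Pi_G$; a loss factor $\gamma$; levels $\overline{\alpha}\in(0.5,1]$, $\underline{\alpha}\in[0,0.5)$; a rate bound $R\in(0,1]$; a maximum area $a_{\max}>0$; an initial state of charge $\hat C\in\mathbb{R}$. Problem $(\mathrm{P})$ (original problem): decision variables $a,\bar C\in\mathbb{R}$, $C_0,\dots,C_K\in\mathbb{R}$, $C_1^+,\dots,C_K^+\in\mathbb{R}$. Minimize $$\Pi_{PV}a+\Pi_B\bar C+\sum_{k=1}^{K}\Pi_R\max(C_k^+-\overline{\alpha}\bar C,0)+\sum_{k=1}^{K}\Pi_G\max(\underline{\alpha}\bar C-C_k^+,0)$$ subject to, for all $k=1,\dots,K$: $C_k=\underline{\alpha}\bar C$ if $C_k^+<\underline{\alpha}\bar C$, $C_k=\overline{\alpha}\bar C$ if $C_k^+>\overline{\alpha}\bar C$, and $C_k=C_k^+$ otherwise (saturation); $C_k^+=\gamma C_{k-1}+aY_{k-1}-X_{k-1}$;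 $C_k-C_{k-1}\le R\bar C$; $C_{k-1}-C_k\le R\bar C$; and moreover $0\le a\le a_{\max}$, $C_0=\hat C$, and (optionally) $a\sum_{k=0}^{K}Y_k\ge\sum_{k=0}^{K}X_k$. Problem $(\mathrm{LP})$: decision variables $a,\bar C\in\mathbb{R}$, $C_0,\dots,C_K\in\mathbb{R}$, $\phi_1^+,\dots,\phi_K^+,\phi_1^-,\dots,\phi_K^-\in\mathbb{R}$. Minimize $$\Pi_{PV}a+\Pi_B\bar C+\sum_{k=1}^{K}\left(\Pi_R\phi_k^++\Pi_G\phi_k^-\right)$$ subject to, for all $k=1,\dots,K$: $C_k+\phi_k^+-\phi_k^-=\gamma C_{k-1}+aY_{k-1}-X_{k-1}$; $\underline{\alpha}\bar C\le C_k\le\overline{\alpha}\bar C$; $\phi_k^+\ge0$, $\phi_k^-\ge0$; $C_k-C_{k-1}\le R\bar C$; $C_{k-1}-C_k\le R\bar C$; and moreover $0\le a\le a_{\max}$, $C_0=\hat C$, and (optionally, exactly when it is imposed in $(\mathrm{P})$) $a\sum_{k=0}^{K}Y_k\ge\sum_{k=0}^{K}X_k$. *)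

theory Defs
  imports Complex_Main "HOL-Library.Extended_Real"
begin

text \<open>Sequences indexed by time steps are functions nat => real; only the
indices 0..K (resp. 1..K) are used. The flag zeh says whether the net-zero-energy
constraint is imposed.\<close>

definition zeh_con :: "nat \<Rightarrow> (nat \<Rightarrow> real) \<Rightarrow> (nat \<Rightarrow> real) \<Rightarrow> real \<Rightarrow> bool" where
  "zeh_con K Y X a \<longleftrightarrow> a * (\<Sum>k=0..K. Y k) \<ge> (\<Sum>k=0..K. X k)"

definition P_obj :: "nat \<Rightarrow> real \<Rightarrow> real \<Rightarrow> real \<Rightarrow> real \<Rightarrow> real \<Rightarrow> real
    \<Rightarrow> real \<Rightarrow> real \<Rightarrow> (nat \<Rightarrow> real) \<Rightarrow> real" where
  "P_obj K PiPV PiB PiR PiG aup alo a Cbar Cp =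
     PiPV * a + PiB * Cbar
     + (\<Sum>k=1..K. PiR * max (Cp k - aup * Cbar) 0)
     + (\<Sum>k=1..K. PiG * max (alo * Cbar - Cp k) 0)"

definition P_feasible :: "bool \<Rightarrow> nat \<Rightarrow> (nat \<Rightarrow> real) \<Rightarrow> (nat \<Rightarrow> real) \<Rightarrow> real
    \<Rightarrow> real \<Rightarrow> real \<Rightarrow> real \<Rightarrow> real \<Rightarrow> real
    \<Rightarrow> real \<Rightarrow> real \<Rightarrow> (nat \<Rightarrow> real) \<Rightarrow> (nat \<Rightarrow> real) \<Rightarrow> bool" where
  "P_feasible zeh K Y X \<gamma> aup alo R amax Chat a Cbar C Cp \<longleftrightarrow>
     (\<forall>k\<in>{1..K}.
        (Cp k < alo * Cbar \<longrightarrow> C k = alo * Cbar) \<and>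
        (Cp k > aup * Cbar \<longrightarrow> C k = aup * Cbar) \<and>
        (\<not> (Cp k < alo * Cbar) \<and> \<not> (Cp k > aup * Cbar) \<longrightarrow> C k = Cp k) \<and>
        Cp k = \<gamma> * C (k - 1) + a * Y (k - 1) - X (k - 1) \<and>
        C k - C (k - 1) \<le> R * Cbar \<and>
        C (k - 1) - C k \<le> R * Cbar) \<and>
     0 \<le> a \<and> a \<le> amax \<and> C 0 = Chat \<and>
     (zeh \<longrightarrow> zeh_con K Y X a)"

definition P_opt :: "bool \<Rightarrow> nat \<Rightarrow> (nat \<Rightarrow> real) \<Rightarrow> (nat \<Rightarrow> real)
    \<Rightarrow> real \<Rightarrow> real \<Rightarrow> real \<Rightarrow> real \<Rightarrow> real
    \<Rightarrow> real \<Rightarrow> real \<Rightarrow> real \<Rightarrow> real \<Rightarrow> real \<Rightarrow> ereal" where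
  "P_opt zeh K Y X PiPV PiB PiR PiG \<gamma> aup alo R amax Chat =
     Inf {ereal (P_obj K PiPV PiB PiR PiG aup alo a Cbar Cp) | a Cbar C Cp.
            P_feasible zeh K Y X \<gamma> aup alo R amax Chat a Cbar C Cp}"

definition LP_obj :: "nat \<Rightarrow> real \<Rightarrow> real \<Rightarrow> real \<Rightarrow> real \<Rightarrow> real \<Rightarrow> real
    \<Rightarrow> (nat \<Rightarrow> real) \<Rightarrow> (nat \<Rightarrow> real) \<Rightarrow> real" where
  "LP_obj K PiPV PiB PiR PiG a Cbar phip phim =
     PiPV * a + PiB * Cbar + (\<Sum>k=1..K. PiR * phip k + PiG * phim k)"

definition LP_feasible :: "bool \<Rightarrow> nat \<Rightarrow> (nat \<Rightarrow> real) \<Rightarrow> (nat \<Rightarrow> real) \<Rightarrow> real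
    \<Rightarrow> real \<Rightarrow> real \<Rightarrow> real \<Rightarrow> real \<Rightarrow> real
    \<Rightarrow> real \<Rightarrow> real \<Rightarrow> (nat \<Rightarrow> real) \<Rightarrow> (nat \<Rightarrow> real) \<Rightarrow> (nat \<Rightarrow> real) \<Rightarrow> bool" where
  "LP_feasible zeh K Y X \<gamma> aup alo R amax Chat a Cbar C phip phim \<longleftrightarrow>
     (\<forall>k\<in>{1..K}.
        C k + phip k - phim k = \<gamma> * C (k - 1) + a * Y (k - 1) - X (k - 1) \<and>
        alo * Cbar \<le> C k \<and> C k \<le> aup * Cbar \<and>
        phip k \<ge> 0 \<and> phim k \<ge> 0 \<and>
        C k - C (k - 1) \<le> R * Cbar \<and>
        C (k - 1) - C k \<le> R * Cbar) \<and>
     0 \<le> a \<and> a \<le> amax \<and> C 0 = Chat \<and>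
     (zeh \<longrightarrow> zeh_con K Y X a)"

definition LP_opt :: "bool \<Rightarrow> nat \<Rightarrow> (nat \<Rightarrow> real) \<Rightarrow> (nat \<Rightarrow> real)
    \<Rightarrow> real \<Rightarrow> real \<Rightarrow> real \<Rightarrow> real \<Rightarrow> real
    \<Rightarrow> real \<Rightarrow> real \<Rightarrow> real \<Rightarrow> real \<Rightarrow> real \<Rightarrow> ereal" where
  "LP_opt zeh K Y X PiPV PiB PiR PiG \<gamma> aup alo R amax Chat =
     Inf {ereal (LP_obj K PiPV PiB PiR PiG a Cbar phip phim) | a Cbar C phip phim.
            LP_feasible zeh K Y X \<gamma> aup alo R amax Chat a Cbar C phip phim}"

end

theory Submission
  imports Defs
begin

text \<open>Every feasible point of (P) yields a feasible point of (LP) with the same cost: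
keep a, Cbar and C, and let phi+ and phi- be the energy cut off by the saturation above
and below. Hence the infimum over (LP) ranges over a superset of the costs of (P).\<close>

lemma saturation_decomposition:
  fixes lo hi x c :: "'a::linordered_ab_group_add"
  assumes "lo \<le> hi"
    and "x < lo \<longrightarrow> c = lo" and "x > hi \<longrightarrow> c = hi" and "\<not> x < lo \<and> \<not> x > hi \<longrightarrow> c = x"
  shows "c + max (x - hi) 0 - max (lo - x) 0 = x" and "lo \<le> c" and "c \<le> hi"
  using assms by (auto simp: max_def)

lemma P_feasible_capacity_nonneg:
  assumes "K \<ge> 1" and "0 < R"
    and "P_feasible zeh K Y X \<gamma> aup alo R amax Chat a Cbar C Cp"
  shows "0 \<le> Cbar"
proof -
  have "C 1 - C 0 \<le> R * Cbar" and "C 0 - C 1 \<le> R * Cbar"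
    using assms(1,3) unfolding P_feasible_def by (metis atLeastAtMost_iff diff_self_eq_0 le_refl)+
  then have "0 \<le> R * Cbar" by linarith
  with \<open>0 < R\<close> show ?thesis by (simp add: zero_le_mult_iff)
qed

lemma P_feasible_imp_LP_feasible:
  assumes "K \<ge> 1" and "1/2 < aup" and "alo < 1/2" and "0 < R"
    and feasible: "P_feasible zeh K Y X \<gamma> aup alo R amax Chat a Cbar C Cp"
  shows "LP_feasible zeh K Y X \<gamma> aup alo R amax Chat a Cbar C
           (\<lambda>k. max (Cp k - aup * Cbar) 0) (\<lambda>k. max (alo * Cbar - Cp k) 0)"
proof -
  have "0 \<le> Cbar" using P_feasible_capacity_nonneg[OF assms(1,4) feasible] .
  then have levels: "alo * Cbar \<le> aup * Cbar"
    using assms(2,3) by (intro mult_right_mono) auto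
  have "\<forall>k\<in>{1..K}. C k + max (Cp k - aup * Cbar) 0 - max (alo * Cbar - Cp k) 0 = Cp k
      \<and> alo * Cbar \<le> C k \<and> C k \<le> aup * Cbar"
    using feasible saturation_decomposition[OF levels] unfolding P_feasible_def by blast
  with feasible show ?thesis
    unfolding P_feasible_def LP_feasible_def by auto
qed

lemma LP_obj_saturation_eq_P_obj:
  "LP_obj K PiPV PiB PiR PiG a Cbar
     (\<lambda>k. max (Cp k - aup * Cbar) 0) (\<lambda>k. max (alo * Cbar - Cp k) 0)
   = P_obj K PiPV PiB PiR PiG aup alo a Cbar Cp"
  unfolding LP_obj_def P_obj_def by (simp add: sum.distrib)

theorem theorem1:
  fixes zeh :: bool and K :: nat and Y X :: "nat \<Rightarrow> real"
    and PiPV PiB PiR PiG \<gamma> aup alo R amax Chat :: real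
  assumes "K \<ge> 1"
    and "1/2 < aup" and "aup \<le> 1"
    and "0 \<le> alo" and "alo < 1/2"
    and "0 < R" and "R \<le> 1"
    and "0 < amax"
  shows "LP_opt zeh K Y X PiPV PiB PiR PiG \<gamma> aup alo R amax Chat
           \<le> P_opt zeh K Y X PiPV PiB PiR PiG \<gamma> aup alo R amax Chat"
  unfolding LP_opt_def P_opt_def
proof (rule Inf_mono, safe)
  fix a Cbar C Cp
  assume "P_feasible zeh K Y X \<gamma> aup alo R amax Chat a Cbar C Cp"
  from P_feasible_imp_LP_feasible[OF assms(1,2,5,6) this]
  show "\<exists>y \<in> {ereal (LP_obj K PiPV PiB PiR PiG a Cbar phip phim) | a Cbar C phip phim.
                LP_feasible zeh K Y X \<gamma> aup alo R amax Chat a Cbar C phip phim}.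
          y \<le> ereal (P_obj K PiPV PiB PiR PiG aup alo a Cbar Cp)"
    by (force simp flip: LP_obj_saturation_eq_P_obj)
qed

end
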